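(* Let $s\in\{0,\pm1,\pm2\}$ and let $\psi_s$ be a smooth spin-weight-$s$ solution of the Teukolsky master equation on the Kerr exterior $r>r_+$. Set $\Psi_s=\sqrt{r^2+a^2}\,\psi_s$ and $\Phi^{(0)}_s=\mu^{-s}\Psi_s$. Then $$\widehat\Box_s\Phi_s^{(0)}=\frac{2s(r^3-3Mr^2+a^2r+a^2M)}{(r^2+a^2)^2}\hat{\mathcal V}\Phi_s^{(0)}-\frac{2(2s+1)ar}{r^2+a^2}\mathcal{L}_\eta\Phi_s^{(0)}-\Big(2s-\frac{(2s+1)\big(2(s+1)Mr^3+a^2r^2-2(s+2)a^2Mr+a^4\big)}{(r^2+a^2)^2}\Big)\Phi_s^{(0)}.$$
   Context: Fix $M>0$, $|a|<M$; Boyer–Lindquist coordinates $(t,r,\theta,\phi)$, $\Delta=r^2-2Mr+a^2$, $r_+=M+\sqrt{M^2-a^2}$, $\mu=\Delta/(r^2+a^2)$. Vector fields: $Y=\frac{(r^2+a^2)\partial_t+a\partial_\phi}{\Delta}-\partial_r$, $V=\frac{(r^2+a^2)\partial_t+a\partial_\phi}{r^2+a^2}+\mu\partial_r$, $\hat V=\mu^{-1}V$, $\hat{\mathcal V}=(r^2+a^2)\hat V$, $\mathcal{L}_\xi=\partial_t$, $\mathcal{L}_\eta=\partial_\phi$. For a complex function $\varphi$ of spin weight $s$: $\mathring{\eth}\varphi=\partial_\theta\varphi+i\csc\theta\partial_\phi\varphi-s\cot\theta\varphi$, $\mathring{\eth}'\varphi=\partial_\theta\varphi-i\csc\theta\partial_\phi\varphi+s\cot\theta\varphi$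 (here $\mathring{\eth}'$ acts with weight $s$ and $\mathring{\eth}$ with weight $s-1$ in $\mathring{\eth}\mathring{\eth}'$). Spin-weighted wave operator $\widehat\Box_s=-(r^2+a^2)YV+\mathring{\eth}\mathring{\eth}'+2a\mathcal{L}_\xi\mathcal{L}_\eta+a^2\sin^2\theta\mathcal{L}_\xi^2-2ias\cos\theta\mathcal{L}_\xi$. Teukolsky master equation, with $\Sigma=r^2+a^2\cos^2\theta$: $0=-\frac{(r^2+a^2)^2-a^2\sin^2\theta\Delta}{\Delta}\partial_t^2\psi_s+\partial_r(\Delta\partial_r\psi_s)-\frac{4aMr}{\Delta}\partial_t\partial_\phi\psi_s-\frac{a^2}{\Delta}\partial_\phi^2\psi_s+\mathring{\eth}\mathring{\eth}'\psi_s-2ias\cos\theta\partial_t\psi_s+2s[(r-M)Y-2r\partial_t]\psi_s$. *)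

theory Defs
  imports "HOL-Analysis.Analysis"
begin

fun Ck_on :: "nat \<Rightarrow> 'a::real_normed_vector set \<Rightarrow> ('a \<Rightarrow> 'b::real_normed_vector) \<Rightarrow> bool" where
  "Ck_on 0 S f = continuous_on S f"
| "Ck_on (Suc k) S f =
     (continuous_on S f \<and>
      (\<exists>f'. (\<forall>x\<in>S. (f has_derivative f' x) (at x)) \<and> (\<forall>v. Ck_on k S (\<lambda>x. f' x v))))"

definition smooth_on :: "'a::real_normed_vector set \<Rightarrow> ('a \<Rightarrow> 'b::real_normed_vector) \<Rightarrow> bool" where
  "smooth_on S f \<longleftrightarrow> (\<forall>k. Ck_on k S f)"

type_synonym sfun = "real \<Rightarrow> real \<Rightarrow> real \<Rightarrow> real \<Rightarrow> complex"

definition dt :: "sfun \<Rightarrow> sfun" where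
  "dt f = (\<lambda>t r \<theta> \<phi>. vector_derivative (\<lambda>x. f x r \<theta> \<phi>) (at t))"
definition dr :: "sfun \<Rightarrow> sfun" where
  "dr f = (\<lambda>t r \<theta> \<phi>. vector_derivative (\<lambda>x. f t x \<theta> \<phi>) (at r))"
definition dth :: "sfun \<Rightarrow> sfun" where
  "dth f = (\<lambda>t r \<theta> \<phi>. vector_derivative (\<lambda>x. f t r x \<phi>) (at \<theta>))"
definition dph :: "sfun \<Rightarrow> sfun" where
  "dph f = (\<lambda>t r \<theta> \<phi>. vector_derivative (\<lambda>x. f t r \<theta> x) (at \<phi>))"

definition Delta :: "real \<Rightarrow> real \<Rightarrow> real \<Rightarrow> real" where
  "Delta M a r = r^2 - 2*M*r + a^2"
definition rplus :: "real \<Rightarrow> real \<Rightarrow> real" where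
  "rplus M a = M + sqrt (M^2 - a^2)"
definition mu :: "real \<Rightarrow> real \<Rightarrow> real \<Rightarrow> real" where
  "mu M a r = Delta M a r / (r^2 + a^2)"

definition exterior :: "real \<Rightarrow> real \<Rightarrow> (real \<times> real \<times> real \<times> real) set" where
  "exterior M a = {(t, r, \<theta>, \<phi>). rplus M a < r \<and> 0 < \<theta> \<and> \<theta> < pi}"

definition Yop :: "real \<Rightarrow> real \<Rightarrow> sfun \<Rightarrow> sfun" where
  "Yop M a f = (\<lambda>t r \<theta> \<phi>.
     of_real ((r^2 + a^2) / Delta M a r) * dt f t r \<theta> \<phi>
     + of_real (a / Delta M a r) * dph f t r \<theta> \<phi> - dr f t r \<theta> \<phi>)"

definition Vop :: "real \<Rightarrow> real \<Rightarrow> sfun \<Rightarrow> sfun" where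
  "Vop M a f = (\<lambda>t r \<theta> \<phi>.
     dt f t r \<theta> \<phi> + of_real (a / (r^2 + a^2)) * dph f t r \<theta> \<phi>
     + of_real (mu M a r) * dr f t r \<theta> \<phi>)"

definition Vhat :: "real \<Rightarrow> real \<Rightarrow> sfun \<Rightarrow> sfun" where
  "Vhat M a f = (\<lambda>t r \<theta> \<phi>. of_real (inverse (mu M a r)) * Vop M a f t r \<theta> \<phi>)"
definition calVhat :: "real \<Rightarrow> real \<Rightarrow> sfun \<Rightarrow> sfun" where
  "calVhat M a f = (\<lambda>t r \<theta> \<phi>. of_real (r^2 + a^2) * Vhat M a f t r \<theta> \<phi>)"

definition eth :: "int \<Rightarrow> sfun \<Rightarrow> sfun" where
  "eth w f = (\<lambda>t r \<theta> \<phi>. dth f t r \<theta> \<phi> + \<i> * of_real (1 / sin \<theta>) * dph f t r \<theta> \<phi>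
                 - of_int w * of_real (cot \<theta>) * f t r \<theta> \<phi>)"
definition eth' :: "int \<Rightarrow> sfun \<Rightarrow> sfun" where
  "eth' w f = (\<lambda>t r \<theta> \<phi>. dth f t r \<theta> \<phi> - \<i> * of_real (1 / sin \<theta>) * dph f t r \<theta> \<phi>
                 + of_int w * of_real (cot \<theta>) * f t r \<theta> \<phi>)"

definition ethSq :: "int \<Rightarrow> sfun \<Rightarrow> sfun" where
  "ethSq s f = eth (s - 1) (eth' s f)"

definition BoxS :: "real \<Rightarrow> real \<Rightarrow> int \<Rightarrow> sfun \<Rightarrow> sfun" where
  "BoxS M a s f = (\<lambda>t r \<theta> \<phi>.
     - of_real (r^2 + a^2) * Yop M a (Vop M a f) t r \<theta> \<phi>
     + ethSq s f t r \<theta> \<phi>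
     + of_real (2 * a) * dt (dph f) t r \<theta> \<phi>
     + of_real (a^2 * (sin \<theta>)^2) * dt (dt f) t r \<theta> \<phi>
     - 2 * \<i> * of_real a * of_int s * of_real (cos \<theta>) * dt f t r \<theta> \<phi>)"

definition Teuk :: "real \<Rightarrow> real \<Rightarrow> int \<Rightarrow> sfun \<Rightarrow> sfun" where
  "Teuk M a s f = (\<lambda>t r \<theta> \<phi>.
     - of_real (((r^2 + a^2)^2 - a^2 * (sin \<theta>)^2 * Delta M a r) / Delta M a r) * dt (dt f) t r \<theta> \<phi>
     + dr (\<lambda>t r \<theta> \<phi>. of_real (Delta M a r) * dr f t r \<theta> \<phi>) t r \<theta> \<phi>
     - of_real (4 * a * M * r / Delta M a r) * dt (dph f) t r \<theta> \<phi>
     - of_real (a^2 / Delta M a r) * dph (dph f) t r \<theta> \<phi>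
     + ethSq s f t r \<theta> \<phi>
     - 2 * \<i> * of_real a * of_int s * of_real (cos \<theta>) * dt f t r \<theta> \<phi>
     + 2 * of_int s * (of_real (r - M) * Yop M a f t r \<theta> \<phi> - of_real (2 * r) * dt f t r \<theta> \<phi>))"

end

theory Submission
  imports Defs
begin

(*
  Write Phi = g(r) psi with g = mu^(-s) sqrt(r^2 + a^2), whose logarithmic derivative is
  L = -s Delta'/Delta + (2s + 1) r/(r^2 + a^2). Multiplication by a function of r commutes with
  d_t, d_phi and with the angular operator eth eth', so the product rule expands Box_s Phi into
  g times the second-order part of the Teukolsky operator plus terms involving only
  g' = g L and g'' = g (L^2 + L'). After using the symmetry of the mixed second derivatives of
  psi, the difference of the two sides of the claimed identity is g times the Teukolsky operator
  applied to psi, which vanishes.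
*)

section \<open>The radial rescaling factor\<close>

lemma exterior_Delta_pos:
  assumes "\<bar>a\<bar> < M" "rplus M a < r"
  shows "0 < Delta M a r" and "0 < r"
proof -
  have "\<bar>a\<bar>^2 < M^2" by (rule power_strict_mono) (use assms in auto)
  then have h: "0 < M^2 - a^2" by simp
  then have s0: "0 \<le> sqrt (M^2 - a^2)" by simp
  have "sqrt (M^2 - a^2) < r - M" using assms(2) unfolding rplus_def by simp
  then have "(sqrt (M^2 - a^2))^2 < (r - M)^2" using s0 by (intro power_strict_mono) auto
  then have "M^2 - a^2 < (r - M)^2" using h by simp
  then show "0 < Delta M a r" unfolding Delta_def by (simp add: power2_eq_square algebra_simps)
  show "0 < r" using assms s0 abs_ge_zero[of a] unfolding rplus_def by linarith
qed

lemma Delta_has_real_derivative: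
  "E = 2 * r - 2 * M \<Longrightarrow> (Delta M a has_real_derivative E) (at r within S)"
  unfolding Delta_def[abs_def] by (auto intro!: derivative_eq_intros)

lemma mu_has_real_derivative:
  assumes "0 < r^2 + a^2"
  shows "(mu M a has_real_derivative
      ((2 * r - 2 * M) * (r^2 + a^2) - Delta M a r * (2 * r)) / (r^2 + a^2)^2) (at r)"
  unfolding mu_def[abs_def] using assms
  by (auto intro!: derivative_eq_intros Delta_has_real_derivative simp: power2_eq_square)

lemma sqrt_sum_squares_has_real_derivative:
  assumes "0 < r^2 + a^2"
  shows "((\<lambda>x. sqrt (x^2 + a^2)) has_real_derivative sqrt (r^2 + a^2) * (r / (r^2 + a^2))) (at r)"
proof -
  define X where "X = r^2 + a^2"
  have X: "0 < X" using assms by (simp add: X_def)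
  have "inverse (sqrt X) / 2 * (2 * r) = r / sqrt X" using X by (simp add: field_simps)
  also have "\<dots> = sqrt X * (r / X)"
    using X by (metis divide_divide_eq_right less_eq_real_def mult.commute real_div_sqrt
        times_divide_eq_right)
  finally have eq: "inverse (sqrt X) / 2 * (2 * r) = sqrt X * (r / X)" .
  have "((\<lambda>x. x^2 + a^2) has_real_derivative 2 * r) (at r)"
    by (auto intro!: derivative_eq_intros)
  from DERIV_chain2[OF DERIV_real_sqrt[OF assms] this]
  have "((\<lambda>x. sqrt (x^2 + a^2)) has_real_derivative inverse (sqrt X) / 2 * (2 * r)) (at r)"
    unfolding X_def .
  then have "((\<lambda>x. sqrt (x^2 + a^2)) has_real_derivative sqrt X * (r / X)) (at r)"
    by (simp only: eq)
  then show ?thesis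
    unfolding X_def .
qed

definition rescaling :: "real \<Rightarrow> real \<Rightarrow> int \<Rightarrow> real \<Rightarrow> real" where
  "rescaling M a s r = mu M a r powi (- s) * sqrt (r^2 + a^2)"

definition rescaling_log_deriv :: "real \<Rightarrow> real \<Rightarrow> int \<Rightarrow> real \<Rightarrow> real" where
  "rescaling_log_deriv M a s r =
     - of_int s * (2 * r - 2 * M) / Delta M a r + (2 * of_int s + 1) * r / (r^2 + a^2)"

lemma rescaling_has_real_derivative:
  assumes "\<bar>a\<bar> < M" "rplus M a < r"
  shows "(rescaling M a s has_real_derivative rescaling M a s r * rescaling_log_deriv M a s r) (at r)"
proof -
  define X where "X = r^2 + a^2"
  have D: "0 < Delta M a r" and "0 < r" using exterior_Delta_pos[OF assms] by auto
  then have X: "0 < X" by (simp add: X_def add_pos_nonneg)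
  define mu' where "mu' = ((2 * r - 2 * M) * X - Delta M a r * (2 * r)) / X^2"
  have "(mu M a has_real_derivative mu') (at r)"
    unfolding mu'_def X_def by (rule mu_has_real_derivative) (use X in \<open>simp add: X_def\<close>)
  moreover have "0 < mu M a r" unfolding mu_def X_def[symmetric] using D X by (rule divide_pos_pos)
  ultimately have pow: "((\<lambda>x. mu M a x powi (- s)) has_real_derivative
      mu M a r powi (- s) * (- of_int s * mu' / mu M a r)) (at r)"
    by (auto intro!: derivative_eq_intros simp: power_int_diff field_simps)
  note sqrt = sqrt_sum_squares_has_real_derivative[OF X[unfolded X_def], folded X_def]
  have key: "mu' / mu M a r = (2 * r - 2 * M) / Delta M a r - 2 * r / X"
    unfolding mu'_def mu_def X_def[symmetric] using D X by (simp add: field_simps power2_eq_square)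
  have "rescaling_log_deriv M a s r = - of_int s * (mu' / mu M a r) + r / X"
    unfolding key rescaling_log_deriv_def X_def[symmetric] using D X by (simp add: field_simps)
  then have L: "rescaling_log_deriv M a s r = - of_int s * mu' / mu M a r + r / X"
    by simp
  show ?thesis
    using DERIV_mult[OF pow sqrt] unfolding rescaling_def[abs_def] X_def[symmetric] L
    by (simp add: algebra_simps)
qed

lemma rescaling_log_deriv_has_real_derivative:
  assumes "\<bar>a\<bar> < M" "rplus M a < r"
  shows "(rescaling_log_deriv M a s has_real_derivative
      - of_int s * (2 * Delta M a r - (2 * r - 2 * M)^2) / (Delta M a r)^2
      + (2 * of_int s + 1) * (a^2 - r^2) / (r^2 + a^2)^2) (at r)"
proof -
  have D: "0 < Delta M a r" and "0 < r" using exterior_Delta_pos[OF assms] by auto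
  then have A: "0 < r^2 + a^2" by (simp add: add_pos_nonneg)
  have "((\<lambda>x. - of_int s * (2 * x - 2 * M) / Delta M a x) has_real_derivative
      - of_int s * (2 * Delta M a r - (2 * r - 2 * M)^2) / (Delta M a r)^2) (at r)"
    using D by (auto intro!: derivative_eq_intros Delta_has_real_derivative simp: power2_eq_square)
      (simp add: algebra_simps)
  moreover have "((\<lambda>x. (2 * of_int s + 1) * x / (x^2 + a^2)) has_real_derivative
      (2 * of_int s + 1) * (a^2 - r^2) / (r^2 + a^2)^2) (at r)"
    using A by (auto intro!: derivative_eq_intros simp: power2_eq_square field_simps)
  ultimately show ?thesis
    unfolding rescaling_log_deriv_def[abs_def] by (rule DERIV_add)
qed

section \<open>Partial derivatives in Boyer--Lindquist coordinates\<close>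

abbreviation uncurried :: "sfun \<Rightarrow> real \<times> real \<times> real \<times> real \<Rightarrow> complex" where
  "uncurried f \<equiv> \<lambda>(t, r, \<theta>, \<phi>). f t r \<theta> \<phi>"

lemma has_vector_derivative_along_line:
  fixes F :: "'a::real_normed_vector \<Rightarrow> 'b::real_normed_vector"
  assumes "(F has_derivative D) (at (x + s *\<^sub>R u))"
  shows "((\<lambda>\<sigma>. F (x + \<sigma> *\<^sub>R u)) has_vector_derivative D u) (at s)"
proof -
  have "((\<lambda>\<sigma>. x + \<sigma> *\<^sub>R u) has_derivative (\<lambda>k. k *\<^sub>R u)) (at s)"
    by (auto intro!: derivative_eq_intros)
  from has_derivative_compose[OF this assms]
  have "((\<lambda>\<sigma>. F (x + \<sigma> *\<^sub>R u)) has_derivative (\<lambda>k. D (k *\<^sub>R u))) (at s)" .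
  then show ?thesis
    unfolding has_vector_derivative_def
    using linear_scale[OF has_derivative_linear[OF assms]] by simp
qed

lemma vector_derivative_along_line_on_open:
  fixes f H :: "'a::real_normed_vector \<Rightarrow> 'b::real_normed_vector"
  assumes "open E" "x + s *\<^sub>R u \<in> E" "\<And>y. y \<in> E \<Longrightarrow> f y = H y"
    and "(H has_derivative D) (at (x + s *\<^sub>R u))"
  shows "vector_derivative (\<lambda>\<sigma>. f (x + \<sigma> *\<^sub>R u)) (at s) = D u"
proof -
  have "open ((\<lambda>\<sigma>. x + \<sigma> *\<^sub>R u) -` E)"
    using assms(1) by (rule continuous_open_vimage) (intro continuous_intros)
  then show ?thesis
    using assms
    by (intro vector_derivative_at has_vector_derivative_transform_within_open
        [OF has_vector_derivative_along_line[OF assms(4)]]) auto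
qed

lemma partials_eq_derivative_on_open:
  assumes "open E" "(t, r, \<theta>, \<phi>) \<in> E" "\<And>q. q \<in> E \<Longrightarrow> uncurried f q = H q"
    and "(H has_derivative D) (at (t, r, \<theta>, \<phi>))"
  shows "dt f t r \<theta> \<phi> = D (1, 0, 0, 0)" and "dr f t r \<theta> \<phi> = D (0, 1, 0, 0)"
    and "dth f t r \<theta> \<phi> = D (0, 0, 1, 0)" and "dph f t r \<theta> \<phi> = D (0, 0, 0, 1)"
proof -
  have line: "vector_derivative (\<lambda>\<sigma>. uncurried f (x + \<sigma> *\<^sub>R u)) (at s) = D u"
    if "x + s *\<^sub>R u = (t, r, \<theta>, \<phi>)" for x u and s :: real
    by (rule vector_derivative_along_line_on_open[OF assms(1) _ assms(3)]) (use assms(2,4) that in simp_all)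
  show "dt f t r \<theta> \<phi> = D (1, 0, 0, 0)"
    using line[of "(0, r, \<theta>, \<phi>)" t "(1, 0, 0, 0)"] by (simp add: dt_def)
  show "dr f t r \<theta> \<phi> = D (0, 1, 0, 0)"
    using line[of "(t, 0, \<theta>, \<phi>)" r "(0, 1, 0, 0)"] by (simp add: dr_def)
  show "dth f t r \<theta> \<phi> = D (0, 0, 1, 0)"
    using line[of "(t, r, 0, \<phi>)" \<theta> "(0, 0, 1, 0)"] by (simp add: dth_def)
  show "dph f t r \<theta> \<phi> = D (0, 0, 0, 1)"
    using line[of "(t, r, \<theta>, 0)" \<phi> "(0, 0, 0, 1)"] by (simp add: dph_def)
qed

definition differential :: "sfun \<Rightarrow> real \<times> real \<times> real \<times> real \<Rightarrow> real \<times> real \<times> real \<times> real \<Rightarrow> complex" where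
  "differential f = (\<lambda>(t, r, \<theta>, \<phi>) (ht, hr, h\<theta>, h\<phi>).
     of_real ht * dt f t r \<theta> \<phi> + of_real hr * dr f t r \<theta> \<phi>
     + of_real h\<theta> * dth f t r \<theta> \<phi> + of_real h\<phi> * dph f t r \<theta> \<phi>)"

lemma has_differential_on_open:
  assumes "open E" "p \<in> E" "\<And>q. q \<in> E \<Longrightarrow> uncurried f q = H q"
    and "(H has_derivative D) (at p)"
  shows "(uncurried f has_derivative differential f p) (at p)"
proof -
  obtain t r \<theta> \<phi> where p: "p = (t, r, \<theta>, \<phi>)" by (metis prod.exhaust)
  note partials = partials_eq_derivative_on_open[OF assms(1) assms(2)[unfolded p] assms(3) assms(4)[unfolded p]]
  have "D h = differential f p h" for h
  proof -
    obtain ht hr h\<theta> h\<phi> where h: "h = (ht, hr, h\<theta>, h\<phi>)" by (metis prod.exhaust)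
    have lin: "linear D" using assms(4) by (rule has_derivative_linear)
    have "D h = D (ht *\<^sub>R (1, 0, 0, 0) + hr *\<^sub>R (0, 1, 0, 0) + h\<theta> *\<^sub>R (0, 0, 1, 0) + h\<phi> *\<^sub>R (0, 0, 0, 1))"
      by (simp add: h)
    also have "\<dots> = ht *\<^sub>R D (1, 0, 0, 0) + hr *\<^sub>R D (0, 1, 0, 0) + h\<theta> *\<^sub>R D (0, 0, 1, 0) + h\<phi> *\<^sub>R D (0, 0, 0, 1)"
      by (simp only: linear_add[OF lin] linear_scale[OF lin])
    finally show ?thesis
      by (simp add: differential_def p h partials scaleR_conv_of_real)
  qed
  then have "D = differential f p" by auto
  moreover have "\<And>q. q \<in> E \<Longrightarrow> H q = uncurried f q" by (rule sym) (rule assms(3))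
  then have "(uncurried f has_derivative D) (at p)"
    by (rule has_derivative_transform_within_open[OF assms(4) assms(1,2)])
  ultimately show ?thesis by simp
qed

lemma has_derivative_of_real_comp:
  assumes "(c has_real_derivative c') (at y)" "bounded_linear \<pi>" "\<pi> x = y"
  shows "((\<lambda>q. complex_of_real (c (\<pi> q))) has_derivative (\<lambda>h. of_real (c' * \<pi> h))) (at x)"
proof -
  have "((\<lambda>q. c (\<pi> q)) has_derivative (\<lambda>h. c' * \<pi> h)) (at x)"
    using has_derivative_compose[OF bounded_linear.has_derivative[OF assms(2) has_derivative_ident]
        assms(1)[folded assms(3), unfolded has_field_derivative_def]]
    by (simp add: mult.commute)
  from has_derivative_compose[OF this bounded_linear.has_derivative[OF bounded_linear_of_real has_derivative_ident]]
  show ?thesis by simp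
qed

lemma partials_radial_mult_on_open:
  assumes "open E" "(t, r, \<theta>, \<phi>) \<in> E"
    and "\<And>q. q \<in> E \<Longrightarrow> uncurried f q = of_real (c (fst (snd q))) * uncurried h q"
    and "(uncurried h has_derivative D) (at (t, r, \<theta>, \<phi>))" "(c has_real_derivative c') (at r)"
  shows "dt f t r \<theta> \<phi> = of_real (c r) * dt h t r \<theta> \<phi>"
    and "dr f t r \<theta> \<phi> = of_real (c r) * dr h t r \<theta> \<phi> + of_real c' * h t r \<theta> \<phi>"
    and "dth f t r \<theta> \<phi> = of_real (c r) * dth h t r \<theta> \<phi>"
    and "dph f t r \<theta> \<phi> = of_real (c r) * dph h t r \<theta> \<phi>"
proof -
  have \<rho>: "bounded_linear (\<lambda>q :: real \<times> real \<times> real \<times> real. fst (snd q))" "fst (snd (t, r, \<theta>, \<phi>)) = r"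
    by (simp_all add: bounded_linear_compose[OF bounded_linear_fst bounded_linear_snd])
  have "((\<lambda>q. of_real (c (fst (snd q))) * uncurried h q) has_derivative
      (\<lambda>k. of_real (c r) * D k + of_real (c' * fst (snd k)) * h t r \<theta> \<phi>)) (at (t, r, \<theta>, \<phi>))"
    using has_derivative_mult[OF has_derivative_of_real_comp[OF assms(5) \<rho>] assms(4)]
    by (simp add: algebra_simps)
  note f = partials_eq_derivative_on_open[OF assms(1,2,3) this]
  note h = partials_eq_derivative_on_open[OF open_UNIV UNIV_I refl assms(4)]
  show "dt f t r \<theta> \<phi> = of_real (c r) * dt h t r \<theta> \<phi>" using f h by simp
  show "dr f t r \<theta> \<phi> = of_real (c r) * dr h t r \<theta> \<phi> + of_real c' * h t r \<theta> \<phi>" using f h by simp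
  show "dth f t r \<theta> \<phi> = of_real (c r) * dth h t r \<theta> \<phi>" using f h by simp
  show "dph f t r \<theta> \<phi> = of_real (c r) * dph h t r \<theta> \<phi>" using f h by simp
qed

section \<open>Symmetry of mixed second derivatives\<close>

lemma norm_diff_le_of_has_vector_derivative:
  fixes f :: "real \<Rightarrow> 'a::real_normed_vector"
  assumes "\<And>\<sigma>. \<bar>\<sigma>\<bar> \<le> \<bar>h\<bar> \<Longrightarrow> (f has_vector_derivative f' \<sigma>) (at \<sigma>)"
    and "\<And>\<sigma>. \<bar>\<sigma>\<bar> \<le> \<bar>h\<bar> \<Longrightarrow> norm (f' \<sigma>) \<le> B"
  shows "norm (f h - f 0) \<le> B * \<bar>h\<bar>"
proof -
  have "norm (f h - f 0) \<le> B * norm (h - 0)"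
  proof (rule differentiable_bound[of "closed_segment 0 h"])
    fix \<sigma> assume "\<sigma> \<in> closed_segment 0 h"
    then have \<sigma>: "\<bar>\<sigma>\<bar> \<le> \<bar>h\<bar>" by (auto simp: closed_segment_eq_real_ivl split: if_splits)
    show "(f has_derivative (\<lambda>k. k *\<^sub>R f' \<sigma>)) (at \<sigma> within closed_segment 0 h)"
      using assms(1)[OF \<sigma>] by (simp add: has_vector_derivative_def has_derivative_at_withinI)
    have "onorm (\<lambda>k::real. k *\<^sub>R f' \<sigma>) \<le> onorm (\<lambda>k::real. k) * norm (f' \<sigma>)"
      by (rule onorm_scaleR_left_lemma) simp
    then show "onorm (\<lambda>k. k *\<^sub>R f' \<sigma>) \<le> B"
      using assms(2)[OF \<sigma>] by (simp add: onorm_id)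
  qed auto
  then show ?thesis by simp
qed

lemma second_difference_estimate:
  fixes F :: "'a::real_normed_vector \<Rightarrow> 'b::real_normed_vector"
  assumes F: "\<And>y. y \<in> ball x d \<Longrightarrow> (F has_derivative F' y) (at y)"
    and Gu: "linear Gu"
    and approx: "\<And>y. y \<in> ball x d \<Longrightarrow> norm (F' y u - F' x u - Gu (y - x)) \<le> \<epsilon> * norm (y - x)"
    and "0 \<le> \<epsilon>" and h: "\<bar>h\<bar> * (norm u + norm v) < d"
  shows "norm (F (x + h *\<^sub>R u + h *\<^sub>R v) - F (x + h *\<^sub>R u) - F (x + h *\<^sub>R v) + F x - h\<^sup>2 *\<^sub>R Gu v)
    \<le> 2 * \<epsilon> * h\<^sup>2 * (norm u + norm v)"
proof -
  define K where "K = norm u + norm v"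
  have near: "y \<in> ball x d" "\<epsilon> * norm (y - x) \<le> \<epsilon> * (\<bar>h\<bar> * K)"
    if "y = x + \<sigma> *\<^sub>R u + k *\<^sub>R v" "\<bar>\<sigma>\<bar> \<le> \<bar>h\<bar>" "\<bar>k\<bar> \<le> \<bar>h\<bar>" for y \<sigma> k
  proof -
    have "norm (y - x) \<le> \<bar>\<sigma>\<bar> * norm u + \<bar>k\<bar> * norm v"
      using norm_triangle_ineq[of "\<sigma> *\<^sub>R u" "k *\<^sub>R v"] that(1) by simp
    also have "\<dots> \<le> \<bar>h\<bar> * K"
      unfolding K_def distrib_left using that(2,3) by (intro add_mono mult_right_mono) auto
    finally have "norm (y - x) \<le> \<bar>h\<bar> * K" .
    then show "y \<in> ball x d" "\<epsilon> * norm (y - x) \<le> \<epsilon> * (\<bar>h\<bar> * K)"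
      using h \<open>0 \<le> \<epsilon>\<close> unfolding K_def by (auto simp: dist_norm norm_minus_commute mult_left_mono)
  qed
  define f where "f \<sigma> = F (x + \<sigma> *\<^sub>R u + h *\<^sub>R v) - F (x + \<sigma> *\<^sub>R u) - \<sigma> *\<^sub>R (h *\<^sub>R Gu v)" for \<sigma>
  define f' where "f' \<sigma> = F' (x + \<sigma> *\<^sub>R u + h *\<^sub>R v) u - F' (x + \<sigma> *\<^sub>R u) u - h *\<^sub>R Gu v" for \<sigma>
  have f': "(f has_vector_derivative f' \<sigma>) (at \<sigma>)" if "\<bar>\<sigma>\<bar> \<le> \<bar>h\<bar>" for \<sigma>
  proof -
    have "(F has_derivative F' (x + h *\<^sub>R v + \<sigma> *\<^sub>R u)) (at (x + h *\<^sub>R v + \<sigma> *\<^sub>R u))"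
      using F near(1)[OF _ that order_refl] by (simp add: add_ac)
    moreover have "(F has_derivative F' (x + \<sigma> *\<^sub>R u)) (at (x + \<sigma> *\<^sub>R u))"
      using F near(1)[of _ \<sigma> 0] that by simp
    ultimately have "((\<lambda>\<sigma>. F (x + h *\<^sub>R v + \<sigma> *\<^sub>R u) - F (x + \<sigma> *\<^sub>R u) - \<sigma> *\<^sub>R (h *\<^sub>R Gu v))
        has_vector_derivative f' \<sigma>) (at \<sigma>)"
      unfolding f'_def
      by (intro has_vector_derivative_diff has_vector_derivative_along_line)
        (auto simp: has_vector_derivative_def add_ac intro!: derivative_eq_intros)
    then show ?thesis unfolding f_def by (simp add: add_ac)
  qed
  have f'_bound: "norm (f' \<sigma>) \<le> 2 * \<epsilon> * \<bar>h\<bar> * K" if "\<bar>\<sigma>\<bar> \<le> \<bar>h\<bar>" for \<sigma>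
  proof -
    define y1 y2 where "y1 = x + \<sigma> *\<^sub>R u + h *\<^sub>R v" and "y2 = x + \<sigma> *\<^sub>R u"
    have "Gu (y1 - x) - Gu (y2 - x) = h *\<^sub>R Gu v"
      unfolding y1_def y2_def by (simp add: linear_add[OF Gu] linear_scale[OF Gu])
    then have "f' \<sigma> = (F' y1 u - F' x u - Gu (y1 - x)) - (F' y2 u - F' x u - Gu (y2 - x))"
      unfolding f'_def y1_def y2_def by (simp add: algebra_simps)
    also have "norm \<dots> \<le> \<epsilon> * (\<bar>h\<bar> * K) + \<epsilon> * (\<bar>h\<bar> * K)"
      using norm_triangle_ineq4 approx near[OF y1_def that order_refl] near[of y2 \<sigma> 0] that
      unfolding y2_def by (smt (verit) add_0_right scale_zero_left)
    finally show ?thesis by (simp add: mult_ac)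
  qed
  have "norm (f h - f 0) \<le> 2 * \<epsilon> * \<bar>h\<bar> * K * \<bar>h\<bar>"
    using f' f'_bound by (rule norm_diff_le_of_has_vector_derivative)
  moreover have "f h - f 0 = F (x + h *\<^sub>R u + h *\<^sub>R v) - F (x + h *\<^sub>R u) - F (x + h *\<^sub>R v) + F x - h\<^sup>2 *\<^sub>R Gu v"
    unfolding f_def by (simp add: algebra_simps power2_eq_square)
  ultimately show ?thesis unfolding K_def by (simp add: power2_eq_square mult_ac)
qed

lemma second_difference_quotient_tendsto:
  fixes F :: "'a::real_normed_vector \<Rightarrow> 'b::real_normed_vector"
  assumes S: "open S" "x \<in> S"
    and F: "\<And>y. y \<in> S \<Longrightarrow> (F has_derivative F' y) (at y)"
    and Gu: "((\<lambda>y. F' y u) has_derivative Gu) (at x)"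
  shows "((\<lambda>h. (1 / h\<^sup>2) *\<^sub>R (F (x + h *\<^sub>R u + h *\<^sub>R v) - F (x + h *\<^sub>R u) - F (x + h *\<^sub>R v) + F x))
    \<longlongrightarrow> Gu v) (at 0)"
  unfolding LIM_eq
proof (intro allI impI)
  fix e :: real assume "0 < e"
  define K where "K = norm u + norm v + 1"
  have "0 < K" unfolding K_def by (simp add: add_nonneg_pos)
  define \<epsilon> where "\<epsilon> = e / (4 * K)"
  have "0 < \<epsilon>" using \<open>0 < e\<close> \<open>0 < K\<close> by (simp add: \<epsilon>_def)
  obtain d1 where "0 < d1"
    and d1: "\<And>y. norm (y - x) < d1 \<Longrightarrow> norm (F' y u - F' x u - Gu (y - x)) \<le> \<epsilon> * norm (y - x)"
    using Gu[unfolded has_derivative_at_alt] \<open>0 < \<epsilon>\<close> by blast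
  obtain d2 where "0 < d2" "ball x d2 \<subseteq> S" using open_contains_ball S by blast
  define d where "d = min d1 d2"
  show "\<exists>\<delta>>0. \<forall>h. h \<noteq> 0 \<and> norm (h - 0) < \<delta> \<longrightarrow>
     norm ((1 / h\<^sup>2) *\<^sub>R (F (x + h *\<^sub>R u + h *\<^sub>R v) - F (x + h *\<^sub>R u)
        - F (x + h *\<^sub>R v) + F x) - Gu v) < e"
  proof (intro exI[of _ "d / K"] conjI allI impI)
    show "0 < d / K" using \<open>0 < d1\<close> \<open>0 < d2\<close> \<open>0 < K\<close> by (simp add: d_def)
    fix h :: real assume h: "h \<noteq> 0 \<and> norm (h - 0) < d / K"
    then have "\<bar>h\<bar> * K < d" using \<open>0 < K\<close> by (simp add: pos_less_divide_eq)
    moreover have "\<bar>h\<bar> * (norm u + norm v) \<le> \<bar>h\<bar> * K" unfolding K_def by (simp add: mult_left_mono)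
    ultimately have hd: "\<bar>h\<bar> * (norm u + norm v) < d" by linarith
    have ball: "y \<in> S" "norm (y - x) < d1" if "y \<in> ball x d" for y
      using that \<open>ball x d2 \<subseteq> S\<close> by (auto simp: d_def dist_norm norm_minus_commute)
    define X where "X = F (x + h *\<^sub>R u + h *\<^sub>R v) - F (x + h *\<^sub>R u) - F (x + h *\<^sub>R v) + F x"
    have "norm (X - h\<^sup>2 *\<^sub>R Gu v) \<le> 2 * \<epsilon> * h\<^sup>2 * (norm u + norm v)"
      unfolding X_def using F ball d1 has_derivative_linear[OF Gu] \<open>0 < \<epsilon>\<close> hd
      by (intro second_difference_estimate[where F' = F']) auto
    also have "\<dots> \<le> 2 * \<epsilon> * h\<^sup>2 * K"
      unfolding K_def using \<open>0 < \<epsilon>\<close> by (intro mult_left_mono) auto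
    also have "\<dots> < h\<^sup>2 * e"
      using h \<open>0 < e\<close> \<open>0 < K\<close> by (simp add: \<epsilon>_def)
    finally have "norm (X - h\<^sup>2 *\<^sub>R Gu v) / h\<^sup>2 < e"
      using h by (simp add: divide_less_eq mult.commute)
    moreover have "(1 / h\<^sup>2) *\<^sub>R X - Gu v = (1 / h\<^sup>2) *\<^sub>R (X - h\<^sup>2 *\<^sub>R Gu v)"
      using h by (simp add: scaleR_diff_right)
    ultimately show "norm ((1 / h\<^sup>2) *\<^sub>R (F (x + h *\<^sub>R u + h *\<^sub>R v) - F (x + h *\<^sub>R u)
        - F (x + h *\<^sub>R v) + F x) - Gu v) < e"
      unfolding X_def[symmetric] by simp
  qed
qed

lemma second_derivative_symmetric:
  fixes F :: "'a::real_normed_vector \<Rightarrow> 'b::real_normed_vector"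
  assumes "open S" "x \<in> S" "\<And>y. y \<in> S \<Longrightarrow> (F has_derivative F' y) (at y)"
    and "((\<lambda>y. F' y u) has_derivative Gu) (at x)" "((\<lambda>y. F' y v) has_derivative Gv) (at x)"
  shows "Gu v = Gv u"
proof -
  have "((\<lambda>h. (1 / h\<^sup>2) *\<^sub>R (F (x + h *\<^sub>R u + h *\<^sub>R v) - F (x + h *\<^sub>R u) - F (x + h *\<^sub>R v) + F x))
      \<longlongrightarrow> Gv u) (at 0)"
    using second_difference_quotient_tendsto[OF assms(1-3,5), of u] by (simp add: algebra_simps)
  with second_difference_quotient_tendsto[OF assms(1-4), of v] show ?thesis
    by (rule tendsto_unique[OF at_neq_bot])
qed

lemma Ck2_onE:
  assumes "Ck_on 2 E f"
  obtains f' f'' where "\<And>x. x \<in> E \<Longrightarrow> (f has_derivative f' x) (at x)"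
    and "\<And>v x. x \<in> E \<Longrightarrow> ((\<lambda>y. f' y v) has_derivative f'' v x) (at x)"
proof -
  obtain f' where f': "\<And>x. x \<in> E \<Longrightarrow> (f has_derivative f' x) (at x)"
    and "\<And>v. Ck_on (Suc 0) E (\<lambda>y. f' y v)"
    using assms by (auto simp: numeral_2_eq_2)
  then have "\<forall>v. \<exists>g. \<forall>x\<in>E. ((\<lambda>y. f' y v) has_derivative g x) (at x)"
    by (metis Ck_on.simps(2))
  then obtain f'' where "\<And>v x. x \<in> E \<Longrightarrow> ((\<lambda>y. f' y v) has_derivative f'' v x) (at x)"
    by metis
  with f' show ?thesis by (rule that)
qed

lemma Ck2_on_open_partialsE:
  assumes "Ck_on 2 E (uncurried \<psi>)"
  obtains \<psi>' \<psi>'' where "\<And>q. q \<in> E \<Longrightarrow> (uncurried \<psi> has_derivative \<psi>' q) (at q)"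
    and "\<And>v q. q \<in> E \<Longrightarrow> ((\<lambda>y. \<psi>' y v) has_derivative \<psi>'' v q) (at q)"
    and "\<And>q. q \<in> E \<Longrightarrow> uncurried (dt \<psi>) q = \<psi>' q (1, 0, 0, 0)"
    and "\<And>q. q \<in> E \<Longrightarrow> uncurried (dr \<psi>) q = \<psi>' q (0, 1, 0, 0)"
    and "\<And>q. q \<in> E \<Longrightarrow> uncurried (dth \<psi>) q = \<psi>' q (0, 0, 1, 0)"
    and "\<And>q. q \<in> E \<Longrightarrow> uncurried (dph \<psi>) q = \<psi>' q (0, 0, 0, 1)"
proof -
  obtain \<psi>' \<psi>'' where d1: "\<And>q. q \<in> E \<Longrightarrow> (uncurried \<psi> has_derivative \<psi>' q) (at q)"
    and d2: "\<And>v q. q \<in> E \<Longrightarrow> ((\<lambda>y. \<psi>' y v) has_derivative \<psi>'' v q) (at q)"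
    using Ck2_onE[OF assms] by blast
  have "dt \<psi> t r \<theta> \<phi> = \<psi>' (t, r, \<theta>, \<phi>) (1, 0, 0, 0) \<and> dr \<psi> t r \<theta> \<phi> = \<psi>' (t, r, \<theta>, \<phi>) (0, 1, 0, 0)
      \<and> dth \<psi> t r \<theta> \<phi> = \<psi>' (t, r, \<theta>, \<phi>) (0, 0, 1, 0) \<and> dph \<psi> t r \<theta> \<phi> = \<psi>' (t, r, \<theta>, \<phi>) (0, 0, 0, 1)"
    if "(t, r, \<theta>, \<phi>) \<in> E" for t r \<theta> \<phi>
    using partials_eq_derivative_on_open[OF open_UNIV UNIV_I refl d1[OF that]] by simp
  then show ?thesis
    using that[OF d1 d2] by (auto split: prod.splits)
qed

lemma Ck2_on_open_has_differential:
  assumes "open E" "Ck_on 2 E (uncurried \<psi>)" "q \<in> E"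
  shows "(uncurried \<psi> has_derivative differential \<psi> q) (at q)"
    and "(uncurried (dt \<psi>) has_derivative differential (dt \<psi>) q) (at q)"
    and "(uncurried (dr \<psi>) has_derivative differential (dr \<psi>) q) (at q)"
    and "(uncurried (dth \<psi>) has_derivative differential (dth \<psi>) q) (at q)"
    and "(uncurried (dph \<psi>) has_derivative differential (dph \<psi>) q) (at q)"
proof -
  obtain \<psi>' \<psi>'' where d1: "\<And>q. q \<in> E \<Longrightarrow> (uncurried \<psi> has_derivative \<psi>' q) (at q)"
    and d2: "\<And>v q. q \<in> E \<Longrightarrow> ((\<lambda>y. \<psi>' y v) has_derivative \<psi>'' v q) (at q)"
    and t: "\<And>q. q \<in> E \<Longrightarrow> uncurried (dt \<psi>) q = \<psi>' q (1, 0, 0, 0)"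
    and r: "\<And>q. q \<in> E \<Longrightarrow> uncurried (dr \<psi>) q = \<psi>' q (0, 1, 0, 0)"
    and th: "\<And>q. q \<in> E \<Longrightarrow> uncurried (dth \<psi>) q = \<psi>' q (0, 0, 1, 0)"
    and ph: "\<And>q. q \<in> E \<Longrightarrow> uncurried (dph \<psi>) q = \<psi>' q (0, 0, 0, 1)"
    using Ck2_on_open_partialsE[OF assms(2)] by blast
  note differential = has_differential_on_open[OF assms(1,3)]
  show "(uncurried \<psi> has_derivative differential \<psi> q) (at q)"
    by (rule differential[where f = \<psi>, OF refl d1[OF assms(3)]])
  show "(uncurried (dt \<psi>) has_derivative differential (dt \<psi>) q) (at q)"
    by (rule differential[where f = "dt \<psi>", OF t d2[OF assms(3)]])
  show "(uncurried (dr \<psi>) has_derivative differential (dr \<psi>) q) (at q)"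
    by (rule differential[where f = "dr \<psi>", OF r d2[OF assms(3)]])
  show "(uncurried (dth \<psi>) has_derivative differential (dth \<psi>) q) (at q)"
    by (rule differential[where f = "dth \<psi>", OF th d2[OF assms(3)]])
  show "(uncurried (dph \<psi>) has_derivative differential (dph \<psi>) q) (at q)"
    by (rule differential[where f = "dph \<psi>", OF ph d2[OF assms(3)]])
qed

lemma Ck2_on_open_mixed_partials:
  assumes "open E" "Ck_on 2 E (uncurried \<psi>)" "(t, r, \<theta>, \<phi>) \<in> E"
  shows "dr (dt \<psi>) t r \<theta> \<phi> = dt (dr \<psi>) t r \<theta> \<phi>"
    and "dph (dt \<psi>) t r \<theta> \<phi> = dt (dph \<psi>) t r \<theta> \<phi>"
    and "dph (dr \<psi>) t r \<theta> \<phi> = dr (dph \<psi>) t r \<theta> \<phi>"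
proof -
  obtain \<psi>' \<psi>'' where d1: "\<And>q. q \<in> E \<Longrightarrow> (uncurried \<psi> has_derivative \<psi>' q) (at q)"
    and d2: "\<And>v q. q \<in> E \<Longrightarrow> ((\<lambda>y. \<psi>' y v) has_derivative \<psi>'' v q) (at q)"
    and t: "\<And>q. q \<in> E \<Longrightarrow> uncurried (dt \<psi>) q = \<psi>' q (1, 0, 0, 0)"
    and r: "\<And>q. q \<in> E \<Longrightarrow> uncurried (dr \<psi>) q = \<psi>' q (0, 1, 0, 0)"
    and "\<And>q. q \<in> E \<Longrightarrow> uncurried (dth \<psi>) q = \<psi>' q (0, 0, 1, 0)"
    and ph: "\<And>q. q \<in> E \<Longrightarrow> uncurried (dph \<psi>) q = \<psi>' q (0, 0, 0, 1)"
    using Ck2_on_open_partialsE[OF assms(2)] by blast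
  note \<psi>t = partials_eq_derivative_on_open[where f = "dt \<psi>", OF assms(1,3) t d2[OF assms(3)]]
    and \<psi>r = partials_eq_derivative_on_open[where f = "dr \<psi>", OF assms(1,3) r d2[OF assms(3)]]
    and \<psi>ph = partials_eq_derivative_on_open[where f = "dph \<psi>", OF assms(1,3) ph d2[OF assms(3)]]
  note sym = second_derivative_symmetric[OF assms(1,3) d1 d2[OF assms(3)] d2[OF assms(3)]]
  show "dr (dt \<psi>) t r \<theta> \<phi> = dt (dr \<psi>) t r \<theta> \<phi>"
    by (metis \<psi>t(2) \<psi>r(1) sym)
  show "dph (dt \<psi>) t r \<theta> \<phi> = dt (dph \<psi>) t r \<theta> \<phi>"
    by (metis \<psi>t(4) \<psi>ph(1) sym)
  show "dph (dr \<psi>) t r \<theta> \<phi> = dr (dph \<psi>) t r \<theta> \<phi>"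
    by (metis \<psi>r(4) \<psi>ph(2) sym)
qed

section \<open>Multiplication by a function of r\<close>

definition radial_mult :: "(real \<Rightarrow> real) \<Rightarrow> sfun \<Rightarrow> sfun" where
  "radial_mult g f = (\<lambda>t r \<theta> \<phi>. of_real (g r) * f t r \<theta> \<phi>)"

lemma radial_mult_apply [simp]: "radial_mult g f t r \<theta> \<phi> = of_real (g r) * f t r \<theta> \<phi>"
  by (simp add: radial_mult_def)

lemma partials_radial_mult:
  assumes "(uncurried f has_derivative D) (at (t, r, \<theta>, \<phi>))" "(g has_real_derivative g') (at r)"
  shows "dt (radial_mult g f) t r \<theta> \<phi> = of_real (g r) * dt f t r \<theta> \<phi>"
    and "dr (radial_mult g f) t r \<theta> \<phi> = of_real (g r) * dr f t r \<theta> \<phi> + of_real g' * f t r \<theta> \<phi>"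
    and "dth (radial_mult g f) t r \<theta> \<phi> = of_real (g r) * dth f t r \<theta> \<phi>"
    and "dph (radial_mult g f) t r \<theta> \<phi> = of_real (g r) * dph f t r \<theta> \<phi>"
proof -
  have "\<And>q. uncurried (radial_mult g f) q = of_real (g (fst (snd q))) * uncurried f q"
    by (simp add: radial_mult_def split: prod.splits)
  from partials_radial_mult_on_open[OF open_UNIV UNIV_I this assms]
  show "dt (radial_mult g f) t r \<theta> \<phi> = of_real (g r) * dt f t r \<theta> \<phi>"
    and "dr (radial_mult g f) t r \<theta> \<phi> = of_real (g r) * dr f t r \<theta> \<phi> + of_real g' * f t r \<theta> \<phi>"
    and "dth (radial_mult g f) t r \<theta> \<phi> = of_real (g r) * dth f t r \<theta> \<phi>"
    and "dph (radial_mult g f) t r \<theta> \<phi> = of_real (g r) * dph f t r \<theta> \<phi>"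
    by (simp_all add: radial_mult_def)
qed

locale radial_rescaling =
  fixes E :: "(real \<times> real \<times> real \<times> real) set" and \<psi> :: sfun and g g' :: "real \<Rightarrow> real"
  assumes open_E: "open E" and C2: "Ck_on 2 E (uncurried \<psi>)"
    and g_deriv: "\<And>q. q \<in> E \<Longrightarrow> (g has_real_derivative g' (fst (snd q))) (at (fst (snd q)))"
begin

lemmas has_differential = Ck2_on_open_has_differential[OF open_E C2]

lemma first_partials:
  assumes "(t, r, \<theta>, \<phi>) \<in> E"
  shows "dt (radial_mult g \<psi>) t r \<theta> \<phi> = of_real (g r) * dt \<psi> t r \<theta> \<phi>"
    and "dr (radial_mult g \<psi>) t r \<theta> \<phi> = of_real (g r) * dr \<psi> t r \<theta> \<phi> + of_real (g' r) * \<psi> t r \<theta> \<phi>"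
    and "dth (radial_mult g \<psi>) t r \<theta> \<phi> = of_real (g r) * dth \<psi> t r \<theta> \<phi>"
    and "dph (radial_mult g \<psi>) t r \<theta> \<phi> = of_real (g r) * dph \<psi> t r \<theta> \<phi>"
  using partials_radial_mult[OF has_differential(1)[OF assms] g_deriv[OF assms, simplified]] by simp_all

lemma time_second_partials:
  assumes "(t, r, \<theta>, \<phi>) \<in> E"
  shows "dt (dt (radial_mult g \<psi>)) t r \<theta> \<phi> = of_real (g r) * dt (dt \<psi>) t r \<theta> \<phi>"
    and "dt (dph (radial_mult g \<psi>)) t r \<theta> \<phi> = of_real (g r) * dt (dph \<psi>) t r \<theta> \<phi>"
proof -
  have eqs: "uncurried (dt (radial_mult g \<psi>)) q = of_real (g (fst (snd q))) * uncurried (dt \<psi>) q"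
    "uncurried (dph (radial_mult g \<psi>)) q = of_real (g (fst (snd q))) * uncurried (dph \<psi>) q"
    if "q \<in> E" for q
    using that first_partials by (auto split: prod.splits)
  note g = g_deriv[OF assms, simplified]
  show "dt (dt (radial_mult g \<psi>)) t r \<theta> \<phi> = of_real (g r) * dt (dt \<psi>) t r \<theta> \<phi>"
    using partials_radial_mult_on_open(1)[OF open_E assms eqs(1) has_differential(2)[OF assms] g] .
  show "dt (dph (radial_mult g \<psi>)) t r \<theta> \<phi> = of_real (g r) * dt (dph \<psi>) t r \<theta> \<phi>"
    using partials_radial_mult_on_open(1)[OF open_E assms eqs(2) has_differential(5)[OF assms] g] .
qed

lemma ethSq_radial_mult:
  assumes "(t, r, \<theta>, \<phi>) \<in> E" "sin \<theta> \<noteq> 0"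
  shows "ethSq s (radial_mult g \<psi>) t r \<theta> \<phi> = of_real (g r) * ethSq s \<psi> t r \<theta> \<phi>"
proof -
  have eth': "uncurried (eth' s (radial_mult g \<psi>)) q = of_real (g (fst (snd q))) * uncurried (eth' s \<psi>) q"
    if "q \<in> E" for q
  proof -
    obtain t' r' \<theta>' \<phi>' where q: "q = (t', r', \<theta>', \<phi>')" by (cases q) auto
    show ?thesis
      using first_partials[OF that[unfolded q]] unfolding q by (simp add: eth'_def algebra_simps)
  qed
  let ?\<theta> = "\<lambda>q :: real \<times> real \<times> real \<times> real. fst (snd (snd q))"
  have \<theta>: "bounded_linear ?\<theta>" "?\<theta> (t, r, \<theta>, \<phi>) = \<theta>"
    by (simp_all add: bounded_linear_compose[OF bounded_linear_fst
        bounded_linear_compose[OF bounded_linear_snd bounded_linear_snd]])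
  have "((\<lambda>x. 1 / sin x) has_real_derivative - cos \<theta> / (sin \<theta> * sin \<theta>)) (at \<theta>)"
    using assms(2) by (auto intro!: derivative_eq_intros)
  note csc = has_derivative_of_real_comp[OF this \<theta>]
    and cot = has_derivative_of_real_comp[OF DERIV_cot[OF assms(2)] \<theta>]
  note d = has_differential[OF assms(1)]
  have "uncurried (eth' s \<psi>) = (\<lambda>q. uncurried (dth \<psi>) q - \<i> * of_real (1 / sin (?\<theta> q)) * uncurried (dph \<psi>) q
      + of_int s * of_real (cot (?\<theta> q)) * uncurried \<psi> q)"
    by (auto simp: eth'_def fun_eq_iff split: prod.splits)
  moreover note has_derivative_add[OF has_derivative_diff[OF d(4)
      has_derivative_mult[OF has_derivative_mult[OF has_derivative_const csc] d(5)]]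
      has_derivative_mult[OF has_derivative_mult[OF has_derivative_const cot] d(1)]]
  ultimately obtain D where "(uncurried (eth' s \<psi>) has_derivative D) (at (t, r, \<theta>, \<phi>))"
    by auto
  note * = partials_radial_mult_on_open[OF open_E assms(1) eth' this g_deriv[OF assms(1), simplified]]
  show ?thesis
    using *(3,4) eth'[OF assms(1), simplified] by (simp add: ethSq_def eth_def algebra_simps)
qed

lemma Vop_partials:
  assumes "(t, r, \<theta>, \<phi>) \<in> E" "(g' has_real_derivative g'') (at r)" "0 < r"
  shows "dt (Vop M a (radial_mult g \<psi>)) t r \<theta> \<phi> =
      of_real (g r) * dt (dt \<psi>) t r \<theta> \<phi> + of_real (a / (r^2 + a^2)) * (of_real (g r) * dt (dph \<psi>) t r \<theta> \<phi>)
      + of_real (mu M a r) * (of_real (g r) * dt (dr \<psi>) t r \<theta> \<phi> + of_real (g' r) * dt \<psi> t r \<theta> \<phi>)"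
      (is ?Vt)
    and "dph (Vop M a (radial_mult g \<psi>)) t r \<theta> \<phi> =
      of_real (g r) * dt (dph \<psi>) t r \<theta> \<phi> + of_real (a / (r^2 + a^2)) * (of_real (g r) * dph (dph \<psi>) t r \<theta> \<phi>)
      + of_real (mu M a r) * (of_real (g r) * dph (dr \<psi>) t r \<theta> \<phi> + of_real (g' r) * dph \<psi> t r \<theta> \<phi>)"
      (is ?Vph)
    and "dr (Vop M a (radial_mult g \<psi>)) t r \<theta> \<phi> =
      (of_real (g r) * dt (dr \<psi>) t r \<theta> \<phi> + of_real (g' r) * dt \<psi> t r \<theta> \<phi>)
      + (of_real (a / (r^2 + a^2)) * (of_real (g r) * dph (dr \<psi>) t r \<theta> \<phi> + of_real (g' r) * dph \<psi> t r \<theta> \<phi>)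
         + of_real (- 2 * a * r / (r^2 + a^2)^2) * (of_real (g r) * dph \<psi> t r \<theta> \<phi>))
      + (of_real (mu M a r) * ((of_real (g r) * dr (dr \<psi>) t r \<theta> \<phi> + of_real (g' r) * dr \<psi> t r \<theta> \<phi>)
           + (of_real (g' r) * dr \<psi> t r \<theta> \<phi> + of_real g'' * \<psi> t r \<theta> \<phi>))
         + of_real (((2 * r - 2 * M) * (r^2 + a^2) - Delta M a r * (2 * r)) / (r^2 + a^2)^2)
           * (of_real (g r) * dr \<psi> t r \<theta> \<phi> + of_real (g' r) * \<psi> t r \<theta> \<phi>))"
      (is ?Vr)
proof -
  let ?\<rho> = "\<lambda>q :: real \<times> real \<times> real \<times> real. fst (snd q)"
  let ?c = "\<lambda>x. a / (x^2 + a^2)"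
  have V: "uncurried (Vop M a (radial_mult g \<psi>)) q =
      of_real (g (?\<rho> q)) * uncurried (dt \<psi>) q
      + of_real (?c (?\<rho> q)) * (of_real (g (?\<rho> q)) * uncurried (dph \<psi>) q)
      + of_real (mu M a (?\<rho> q)) * (of_real (g (?\<rho> q)) * uncurried (dr \<psi>) q + of_real (g' (?\<rho> q)) * uncurried \<psi> q)"
    if "q \<in> E" for q
    using that first_partials by (auto simp: Vop_def split: prod.splits)
  have \<rho>: "bounded_linear ?\<rho>" "?\<rho> (t, r, \<theta>, \<phi>) = r"
    by (simp_all add: bounded_linear_compose[OF bounded_linear_fst bounded_linear_snd])
  have "0 < r^2 + a^2" using assms(3) by (simp add: add_pos_nonneg)
  then have "(?c has_real_derivative - 2 * a * r / (r^2 + a^2)^2) (at r)"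
    by (auto intro!: derivative_eq_intros simp: power2_eq_square)
  note c = has_derivative_of_real_comp[OF this \<rho>]
    and m = has_derivative_of_real_comp[OF mu_has_real_derivative[OF \<open>0 < r^2 + a^2\<close>] \<rho>]
    and dg = has_derivative_of_real_comp[OF g_deriv[OF assms(1), simplified] \<rho>]
    and dg' = has_derivative_of_real_comp[OF assms(2) \<rho>]
  note d = has_differential[OF assms(1)]
  note DV = has_derivative_add[OF has_derivative_add[OF has_derivative_mult[OF dg d(2)]
      has_derivative_mult[OF c has_derivative_mult[OF dg d(5)]]]
      has_derivative_mult[OF m has_derivative_add[OF has_derivative_mult[OF dg d(3)] has_derivative_mult[OF dg' d(1)]]]]
  note partials = partials_eq_derivative_on_open[OF open_E assms(1) V DV]
  note mixed = Ck2_on_open_mixed_partials[OF open_E C2 assms(1)]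
  show ?Vt ?Vph ?Vr
    using partials mixed by (simp_all add: differential_def algebra_simps)
qed

end

section \<open>The rescaled Teukolsky equation\<close>

lemma rescaled_Teukolsky_algebra:
  fixes R a M s S C g dg ddg L L' A D u ut ur uph utt utr utph urr urph uphph eth V Vt Vph Vr Box RHS T :: complex
  assumes "D \<noteq> 0" "A \<noteq> 0" and A: "A = R^2 + a^2" and D: "D = R^2 - 2 * M * R + a^2"
    and L: "L = - s * (2 * R - 2 * M) / D + (2 * s + 1) * R / A"
    and L': "L' = - s * (2 * D - (2 * R - 2 * M)^2) / D^2 + (2 * s + 1) * (a^2 - R^2) / A^2"
    and dg: "dg = g * L" and ddg: "ddg = dg * L + g * L'"
    and V: "V = g * ut + (a / A) * (g * uph) + (D / A) * (g * ur + dg * u)"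
    and Vt: "Vt = g * utt + (a / A) * (g * utph) + (D / A) * (g * utr + dg * ut)"
    and Vph: "Vph = g * utph + (a / A) * (g * uphph) + (D / A) * (g * urph + dg * uph)"
    and Vr: "Vr = (g * utr + dg * ut) + ((a / A) * (g * urph + dg * uph) + (- 2 * a * R / A^2) * (g * uph))
      + ((D / A) * ((g * urr + dg * ur) + (dg * ur + ddg * u))
         + (((2 * R - 2 * M) * A - D * (2 * R)) / A^2) * (g * ur + dg * u))"
    and Box: "Box = - A * ((A / D) * Vt + (a / D) * Vph - Vr) + g * eth + 2 * a * (g * utph)
      + a^2 * S^2 * (g * utt) - 2 * \<i> * a * s * C * (g * ut)"
    and RHS: "RHS = (2 * s * (R^3 - 3 * M * R^2 + a^2 * R + a^2 * M) / A^2) * (A * (A / D) * V)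
      - (2 * (2 * s + 1) * a * R / A) * (g * uph)
      - (2 * s - (2 * s + 1) * (2 * (s + 1) * M * R^3 + a^2 * R^2 - 2 * (s + 2) * a^2 * M * R + a^4) / A^2)
        * (g * u)"
    and T: "T = - ((A^2 - a^2 * S^2 * D) / D) * utt + (D * urr + (2 * R - 2 * M) * ur)
      - (4 * a * M * R / D) * utph - (a^2 / D) * uphph + eth - 2 * \<i> * a * s * C * ut
      + 2 * s * ((R - M) * ((A / D) * ut + (a / D) * uph - ur) - 2 * R * ut)"
  shows "Box - RHS = g * T"
proof -
  define K where "K = 2 * s * (R^3 - 3 * M * R^2 + a^2 * R + a^2 * M) / A^2"
  define N where "N = 2 * s - (2 * s + 1) * (2 * (s + 1) * M * R^3 + a^2 * R^2 - 2 * (s + 2) * a^2 * M * R + a^4) / A^2"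
  define B where "B = 2 * (2 * s + 1) * a * R / A"
  define \<mu> where "\<mu> = D / A"
  define c where "c = a / A"
  define c' where "c' = - 2 * a * R / A^2"
  define \<mu>' where "\<mu>' = ((2 * R - 2 * M) * A - D * (2 * R)) / A^2"
  have collect: "Box - RHS - g * T
     = g * ((- A * (A / D) + a^2 * S^2 + (A^2 - a^2 * S^2 * D) / D) * utt
         + (- A * (A / D) * c - A * (a / D) + 2 * a + 4 * a * M * R / D) * utph
         + (- A * (A / D) * \<mu> + A) * utr
         + (- A * (a / D) * c + a^2 / D) * uphph
         + (- A * (a / D) * \<mu> + A * c) * urph
         + (A * \<mu> - D) * urr
         + (- A * (A / D) * \<mu> * L + A * L - K * (A * (A / D)) - 2 * s * ((R - M) * (A / D) - 2 * R)) * ut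
         + (- A * (a / D) * \<mu> * L + A * (c * L + c') - K * (A * (A / D)) * c + B - 2 * s * (R - M) * (a / D)) * uph
         + (A * (\<mu> * (2 * L) + \<mu>') - K * (A * (A / D)) * \<mu> - ((2 * R - 2 * M) - 2 * s * (R - M))) * ur
         + (A * (\<mu> * (L * L + L') + \<mu>' * L) - K * (A * (A / D)) * \<mu> * L + N) * u)"
    unfolding Box RHS V Vt Vph Vr ddg dg T K_def N_def B_def \<mu>_def c_def c'_def \<mu>'_def
    by (simp add: algebra_simps diff_divide_distrib add_divide_distrib)
  have c_utt: "- A * (A / D) + a^2 * S^2 + (A^2 - a^2 * S^2 * D) / D = 0"
    using assms(1,2) by (simp add: field_simps power2_eq_square)
  have c_utph: "- A * (A / D) * c - A * (a / D) + 2 * a + 4 * a * M * R / D = 0"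
    unfolding c_def using assms(1,2) apply (simp add: field_simps) apply (simp add: A D) by algebra
  have c_utr: "- A * (A / D) * \<mu> + A = 0" and c_uphph: "- A * (a / D) * c + a^2 / D = 0"
    and c_urph: "- A * (a / D) * \<mu> + A * c = 0" and c_urr: "A * \<mu> - D = 0"
    unfolding c_def \<mu>_def using assms(1,2) by (simp_all add: field_simps power2_eq_square)
  have c_ut: "- A * (A / D) * \<mu> * L + A * L - K * (A * (A / D)) - 2 * s * ((R - M) * (A / D) - 2 * R) = 0"
    unfolding \<mu>_def K_def L using assms(1,2) apply (simp add: field_simps) apply (simp add: A D) by algebra
  have c_uph: "- A * (a / D) * \<mu> * L + A * (c * L + c') - K * (A * (A / D)) * c + B - 2 * s * (R - M) * (a / D) = 0"
    unfolding \<mu>_def K_def c_def c'_def B_def L using assms(1,2)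
    apply (simp add: field_simps) apply (simp add: A D) by algebra
  have c_ur: "A * (\<mu> * (2 * L) + \<mu>') - K * (A * (A / D)) * \<mu> - ((2 * R - 2 * M) - 2 * s * (R - M)) = 0"
    unfolding \<mu>_def K_def \<mu>'_def L using assms(1,2) apply (simp add: field_simps) apply (simp add: A D) by algebra
  have c_u: "A * (\<mu> * (L * L + L') + \<mu>' * L) - K * (A * (A / D)) * \<mu> * L + N = 0"
    unfolding \<mu>_def K_def \<mu>'_def N_def L L' using assms(1,2)
    apply (simp add: field_simps) apply (simp add: A D) by algebra
  have "Box - RHS - g * T = 0"
    unfolding collect c_utt c_utph c_utr c_uphph c_urph c_urr c_ut c_uph c_ur c_u by simp
  then show ?thesis by simp
qed

lemma open_exterior: "open (exterior M a)"
proof -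
  have "exterior M a = (\<lambda>q. fst (snd q)) -` {rplus M a<..} \<inter> (\<lambda>q. fst (snd (snd q))) -` {0<..<pi}"
    by (auto simp: exterior_def)
  moreover have "open ((\<lambda>q :: real \<times> real \<times> real \<times> real. fst (snd q)) -` {rplus M a<..})"
    by (intro continuous_open_vimage open_greaterThan continuous_intros)
  moreover have "open ((\<lambda>q :: real \<times> real \<times> real \<times> real. fst (snd (snd q))) -` {0<..<pi})"
    by (intro continuous_open_vimage open_greaterThanLessThan continuous_intros)
  ultimately show ?thesis by (simp add: open_Int)
qed

lemma BoxS_rescaled_eq:
  fixes s :: int
  assumes "\<bar>a\<bar> < M" "(t, r, \<theta>, \<phi>) \<in> exterior M a" "Ck_on 2 (exterior M a) (uncurried \<psi>)"
    and "Teuk M a s \<psi> t r \<theta> \<phi> = 0"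
  defines "\<Phi> \<equiv> radial_mult (rescaling M a s) \<psi>"
  shows "BoxS M a s \<Phi> t r \<theta> \<phi> =
       of_real (2 * of_int s * (r^3 - 3*M*r^2 + a^2*r + a^2*M) / (r^2 + a^2)^2) * calVhat M a \<Phi> t r \<theta> \<phi>
     - of_real (2 * (2 * of_int s + 1) * a * r / (r^2 + a^2)) * dph \<Phi> t r \<theta> \<phi>
     - of_real (2 * of_int s - (2 * of_int s + 1) *
          (2 * (of_int s + 1) * M * r^3 + a^2 * r^2 - 2 * (of_int s + 2) * a^2 * M * r + a^4)
          / (r^2 + a^2)^2) * \<Phi> t r \<theta> \<phi>"
proof -
  let ?g = "rescaling M a s" and ?L = "rescaling_log_deriv M a s"
  define L' where "L' = - of_int s * (2 * Delta M a r - (2 * r - 2 * M)^2) / (Delta M a r)^2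
      + (2 * of_int s + 1) * (a^2 - r^2) / (r^2 + a^2)^2"
  have r: "rplus M a < r" and "0 < \<theta>" "\<theta> < pi" using assms(2) by (auto simp: exterior_def)
  then have "sin \<theta> \<noteq> 0" using sin_gt_zero by force
  have "0 < Delta M a r" "0 < r" using exterior_Delta_pos[OF assms(1) r] by auto
  then have D: "complex_of_real (Delta M a r) \<noteq> 0" and A: "complex_of_real (r^2 + a^2) \<noteq> 0"
    by (simp_all only: of_real_eq_0_iff) (simp_all add: add_pos_nonneg)
  interpret radial_rescaling "exterior M a" \<psi> ?g "\<lambda>x. ?g x * ?L x"
    using open_exterior assms(3) rescaling_has_real_derivative[OF assms(1)]
    by unfold_locales (auto simp: exterior_def)
  have g'': "((\<lambda>x. ?g x * ?L x) has_real_derivative ?g r * ?L r * ?L r + L' * ?g r) (at r)"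
    unfolding L'_def
    by (rule DERIV_mult[OF rescaling_has_real_derivative[OF assms(1) r] rescaling_log_deriv_has_real_derivative[OF assms(1) r]])
  have Teuk_dr: "dr (\<lambda>t r \<theta> \<phi>. of_real (Delta M a r) * dr \<psi> t r \<theta> \<phi>) t r \<theta> \<phi>
      = of_real (Delta M a r) * dr (dr \<psi>) t r \<theta> \<phi> + of_real (2 * r - 2 * M) * dr \<psi> t r \<theta> \<phi>"
    using partials_radial_mult(2)[OF has_differential(3)[OF assms(2)] Delta_has_real_derivative[OF refl]]
    by (simp add: radial_mult_def)
  have Delta_eq: "complex_of_real (Delta M a r) = (of_real r)^2 - 2 * of_real M * of_real r + (of_real a)^2"
    by (simp add: Delta_def)
  have Vop_eq: "Vop M a (radial_mult ?g \<psi>) t r \<theta> \<phi> = dt (radial_mult ?g \<psi>) t r \<theta> \<phi>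
      + of_real (a / (r^2 + a^2)) * dph (radial_mult ?g \<psi>) t r \<theta> \<phi>
      + of_real (mu M a r) * dr (radial_mult ?g \<psi>) t r \<theta> \<phi>"
    by (simp add: Vop_def)
  note facts = Teuk_dr Delta_eq Vop_eq first_partials[OF assms(2)] time_second_partials[OF assms(2)]
    ethSq_radial_mult[OF assms(2) \<open>sin \<theta> \<noteq> 0\<close>, where s = s]
    Vop_partials[OF assms(2) g'' \<open>0 < r\<close>, where M = M and a = a]
  \<comment> \<open>the difference of the two sides is \<open>g r\<close> times the Teukolsky operator applied to \<open>\<psi>\<close>\<close>
  show ?thesis
  proof (rule right_minus_eq[THEN iffD1], rule trans[OF rescaled_Teukolsky_algebra[OF D A, where R = "of_real r" and a = "of_real a" and M = "of_real M"
      and s = "of_int s" and S = "of_real (sin \<theta>)" and C = "of_real (cos \<theta>)"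
      and g = "of_real (?g r)" and dg = "of_real (?g r * ?L r)" and ddg = "of_real (?g r * ?L r * ?L r + L' * ?g r)"
      and L = "of_real (?L r)" and L' = "of_real L'"
      and u = "\<psi> t r \<theta> \<phi>" and ut = "dt \<psi> t r \<theta> \<phi>" and ur = "dr \<psi> t r \<theta> \<phi>" and uph = "dph \<psi> t r \<theta> \<phi>"
      and utt = "dt (dt \<psi>) t r \<theta> \<phi>" and utr = "dt (dr \<psi>) t r \<theta> \<phi>" and utph = "dt (dph \<psi>) t r \<theta> \<phi>"
      and urr = "dr (dr \<psi>) t r \<theta> \<phi>" and urph = "dph (dr \<psi>) t r \<theta> \<phi>" and uphph = "dph (dph \<psi>) t r \<theta> \<phi>"
      and eth = "ethSq s \<psi> t r \<theta> \<phi>" and V = "Vop M a (radial_mult ?g \<psi>) t r \<theta> \<phi>"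
      and Vt = "dt (Vop M a (radial_mult ?g \<psi>)) t r \<theta> \<phi>"
      and Vph = "dph (Vop M a (radial_mult ?g \<psi>)) t r \<theta> \<phi>"
      and Vr = "dr (Vop M a (radial_mult ?g \<psi>)) t r \<theta> \<phi>"
      and T = "Teuk M a s \<psi> t r \<theta> \<phi>"]])
  qed (use facts assms(4) in \<open>simp_all add: \<Phi>_def L'_def rescaling_log_deriv_def mu_def BoxS_def Yop_def Teuk_def
        calVhat_def Vhat_def radial_mult_apply\<close>)
qed

theorem proposition3p11:
  fixes M a :: real and s :: int and \<psi> :: sfun
  assumes "M > 0" and "\<bar>a\<bar> < M"
    and "s \<in> {-2, -1, 0, 1, 2}"
    and "smooth_on (exterior M a) (\<lambda>(t, r, \<theta>, \<phi>). \<psi> t r \<theta> \<phi>)"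
    and "\<forall>(t, r, \<theta>, \<phi>) \<in> exterior M a. Teuk M a s \<psi> t r \<theta> \<phi> = 0"
  defines "\<Phi> \<equiv> (\<lambda>t r \<theta> \<phi>. of_real ((mu M a r powi (- s)) * sqrt (r^2 + a^2)) * \<psi> t r \<theta> \<phi>)"
  shows "\<forall>(t, r, \<theta>, \<phi>) \<in> exterior M a.
     BoxS M a s \<Phi> t r \<theta> \<phi> =
       of_real (2 * of_int s * (r^3 - 3*M*r^2 + a^2*r + a^2*M) / (r^2 + a^2)^2) * calVhat M a \<Phi> t r \<theta> \<phi>
     - of_real (2 * (2 * of_int s + 1) * a * r / (r^2 + a^2)) * dph \<Phi> t r \<theta> \<phi>
     - of_real (2 * of_int s - (2 * of_int s + 1) *
          (2 * (of_int s + 1) * M * r^3 + a^2 * r^2 - 2 * (of_int s + 2) * a^2 * M * r + a^4)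
          / (r^2 + a^2)^2) * \<Phi> t r \<theta> \<phi>"
proof -
  have \<Phi>: "\<Phi> = radial_mult (rescaling M a s) \<psi>"
    by (simp add: \<Phi>_def radial_mult_def rescaling_def)
  have C2: "Ck_on 2 (exterior M a) (uncurried \<psi>)"
    using assms(4) by (simp add: smooth_on_def)
  show ?thesis
    unfolding \<Phi> Ball_def split_paired_All case_prod_conv using assms(5)
    by (intro allI impI BoxS_rescaled_eq[OF assms(2) _ C2]) auto
qed

end
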